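(* Let $n\ge 3$, $n\neq 4$, and let $\Gamma$ be the graph with vertex set $\{u_i,v_i: i\in\mathbb Z_n\}$ in which $u_i$ and $v_i$ both have neighbourhood $\{u_{i-1},u_{i+1},v_{i-1},v_{i+1}\}$ (this is the Rose Window graph $R_n(2,1)$ with $u_i=x_i$, $v_i=y_{i-1}$). For $i\in\mathbb Z_n$ let $\sigma_i$ be the automorphism interchanging $u_i$ and $v_i$ and fixing all other vertices, and let $N=\langle\sigma_0,\ldots,\sigma_{n-1}\rangle$; denote $\prod_{j}\sigma_j^{i_j}\in N$ ($i_j\in\{0,1\}$) by the tuple $(i_0,i_1,\ldots,i_{n-1})$. Let $\mathcal M$ be a map of class $2_{\{0,1\}}$ with underlying graph $\Gamma$ and let $T=N\cap\mathrm{Aut}(\mathcal M)$. Then either $T=\{(0,0,\ldots,0),(0,1,1,0,1,1,\ldots,0,1,1),(1,0,1,1,0,1,\ldots,1,0,1),(1,1,0,1,1,0,\ldots,1,1,0)\}$, in which case $3\mid n$, or $T=\{(0,0,\ldots,0),(0,1,0,1,\ldots,0,1),(1,0,1,0,\ldots,1,0),(1,1,\ldots,1)\}$, in which case $2\mid n$. In particular, $\gcd(n,6)\neq 1$.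
   Context: A map is a $2$-cell embedding of a connected simple graph (its underlying graph) in a closed surface; the components of the complement are the faces. All maps considered are polytopal: flags correspond bijectively to incident triples (vertex, edge, face). For a flag $\Phi$ and $i\in\{0,1,2\}$, $\Phi^i$ is the unique flag differing from $\Phi$ exactly in its vertex ($i=0$), edge ($i=1$) or face ($i=2$). $\mathrm{Aut}(\mathcal M)$ is the group of automorphisms of the underlying graph preserving the set of faces, acting on flags. A map is in class $2_{\{0,1\}}$ if $\mathrm{Aut}(\mathcal M)$ has exactly two orbits on flags and for every flag $\Phi$, the flags $\Phi^0,\Phi^1$ lie in the orbit of $\Phi$ while $\Phi^2$ does not. *)

theory Defs
  imports Main
begin

definition simple_graph :: "'v set \<Rightarrow> 'v set set \<Rightarrow> bool" where
  "simple_graph V E \<longleftrightarrow> finite V \<and>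
     (\<forall>e\<in>E. \<exists>x y. x \<noteq> y \<and> x \<in> V \<and> y \<in> V \<and> e = {x, y})"

definition connected_graph :: "'v set \<Rightarrow> 'v set set \<Rightarrow> bool" where
  "connected_graph V E \<longleftrightarrow> V \<noteq> {} \<and>
     (\<forall>A. A \<subseteq> V \<and> A \<noteq> {} \<and> (\<forall>e\<in>E. \<forall>x\<in>e. \<forall>y\<in>e. x \<in> A \<longrightarrow> y \<in> A) \<longrightarrow> A = V)"

definition is_cycle_edges :: "'v set set \<Rightarrow> 'v set set \<Rightarrow> bool" where
  "is_cycle_edges E C \<longleftrightarrow> C \<subseteq> E \<and> finite C \<and> C \<noteq> {} \<and>
     (\<forall>x\<in>\<Union>C. card {e\<in>C. x \<in> e} = 2) \<and>
     (\<forall>D. D \<subseteq> C \<and> D \<noteq> {} \<and> (\<forall>e\<in>D. \<forall>e'\<in>C. e \<inter> e' \<noteq> {} \<longrightarrow> e' \<in> D) \<longrightarrow> D = C)"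

(* A polytopal map with underlying graph (V,E), described combinatorially by its set F
   of faces, each face given by the edge set of its boundary cycle.  Closed-surface
   conditions: every edge lies in exactly two faces, and the faces around each vertex
   form a single cycle (connected vertex link). *)
definition polytopal_map :: "'v set \<Rightarrow> 'v set set \<Rightarrow> 'v set set set \<Rightarrow> bool" where
  "polytopal_map V E F \<longleftrightarrow> simple_graph V E \<and> connected_graph V E \<and>
     (\<forall>f\<in>F. is_cycle_edges E f) \<and>
     (\<forall>e\<in>E. card {f\<in>F. e \<in> f} = 2) \<and>
     (\<forall>v\<in>V. \<forall>A. A \<subseteq> {e\<in>E. v \<in> e} \<and> A \<noteq> {} \<and>
        (\<forall>e\<in>A. \<forall>e'\<in>{e\<in>E. v \<in> e}. (\<exists>f\<in>F. e \<in> f \<and> e' \<in> f) \<longrightarrow> e' \<in> A)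
        \<longrightarrow> A = {e\<in>E. v \<in> e})"

type_synonym 'v flag = "'v \<times> 'v set \<times> 'v set set"

definition flags :: "'v set set set \<Rightarrow> 'v flag set" where
  "flags F = {(v, e, f). f \<in> F \<and> e \<in> f \<and> v \<in> e}"

definition flag0 :: "'v set set set \<Rightarrow> 'v flag \<Rightarrow> 'v flag" where
  "flag0 F \<Phi> = (THE \<Psi>. \<Psi> \<in> flags F \<and> fst \<Psi> \<noteq> fst \<Phi> \<and> snd \<Psi> = snd \<Phi>)"

definition flag1 :: "'v set set set \<Rightarrow> 'v flag \<Rightarrow> 'v flag" where
  "flag1 F \<Phi> = (THE \<Psi>. \<Psi> \<in> flags F \<and> fst \<Psi> = fst \<Phi> \<and>
      fst (snd \<Psi>) \<noteq> fst (snd \<Phi>) \<and> snd (snd \<Psi>) = snd (snd \<Phi>))"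

definition flag2 :: "'v set set set \<Rightarrow> 'v flag \<Rightarrow> 'v flag" where
  "flag2 F \<Phi> = (THE \<Psi>. \<Psi> \<in> flags F \<and> fst \<Psi> = fst \<Phi> \<and>
      fst (snd \<Psi>) = fst (snd \<Phi>) \<and> snd (snd \<Psi>) \<noteq> snd (snd \<Phi>))"

definition map_aut :: "'v set \<Rightarrow> 'v set set \<Rightarrow> 'v set set set \<Rightarrow> ('v \<Rightarrow> 'v) set" where
  "map_aut V E F = {g. bij_betw g V V \<and> (\<forall>x. x \<notin> V \<longrightarrow> g x = x) \<and>
      (\<lambda>e. g ` e) ` E = E \<and> (\<lambda>f. (\<lambda>e. g ` e) ` f) ` F = F}"

definition flag_act :: "('v \<Rightarrow> 'v) \<Rightarrow> 'v flag \<Rightarrow> 'v flag" where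
  "flag_act g \<Phi> = (case \<Phi> of (v, e, f) \<Rightarrow> (g v, g ` e, (\<lambda>e'. g ` e') ` f))"

definition flag_orbit :: "'v set \<Rightarrow> 'v set set \<Rightarrow> 'v set set set \<Rightarrow> 'v flag \<Rightarrow> 'v flag set" where
  "flag_orbit V E F \<Phi> = {flag_act g \<Phi> | g. g \<in> map_aut V E F}"

definition class_2_01 :: "'v set \<Rightarrow> 'v set set \<Rightarrow> 'v set set set \<Rightarrow> bool" where
  "class_2_01 V E F \<longleftrightarrow>
     card (flag_orbit V E F ` flags F) = 2 \<and>
     (\<forall>\<Phi>\<in>flags F. flag0 F \<Phi> \<in> flag_orbit V E F \<Phi> \<and> flag1 F \<Phi> \<in> flag_orbit V E F \<Phi>
        \<and> flag2 F \<Phi> \<notin> flag_orbit V E F \<Phi>)"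

(* The graph Gamma: u_i = (i, False), v_i = (i, True), i in Z_n = {0..<n}. *)
definition RV :: "nat \<Rightarrow> (nat \<times> bool) set" where
  "RV n = {(i, b). i < n}"

definition RE :: "nat \<Rightarrow> (nat \<times> bool) set set" where
  "RE n = {{(i, a), (j, b)} | i j a b. i < n \<and> j = (i + 1) mod n}"

(* The element (i_0,...,i_{n-1}) of N, encoded by S = {j. i_j = 1}: product of sigma_j, j in S *)
definition flipN :: "nat \<Rightarrow> nat set \<Rightarrow> (nat \<times> bool \<Rightarrow> nat \<times> bool)" where
  "flipN n S = (\<lambda>(j, b). if j < n \<and> j \<in> S then (j, \<not> b) else (j, b))"

definition sigma :: "nat \<Rightarrow> nat \<Rightarrow> (nat \<times> bool \<Rightarrow> nat \<times> bool)" where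
  "sigma n i = flipN n {i}"

(* N = <sigma_0, ..., sigma_{n-1}> (an elementary abelian 2-group: all products of
   distinct commuting involutions sigma_j) *)
definition groupN :: "nat \<Rightarrow> (nat \<times> bool \<Rightarrow> nat \<times> bool) set" where
  "groupN n = {flipN n S | S. S \<subseteq> {..<n}}"

end

theory Submission
  imports Defs
begin

text \<open>
  For \<open>n \<noteq> 4\<close> the blocks \<open>{u\<^sub>i, v\<^sub>i}\<close> are exactly the classes of vertices with equal
  neighbourhoods, so every automorphism of the map permutes them like an automorphism of the
  \<open>n\<close>-cycle. Since \<open>\<Phi>\<^sup>2\<close> is never in the orbit of \<open>\<Phi>\<close>, an automorphism fixing a vertex and an
  edge at it fixes every edge at that vertex; hence an element of \<open>T\<close> flipping the blocks in
  \<open>S\<close> is trivial as soon as two consecutive indices lie outside \<open>S\<close>. The conditions on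
  \<open>\<Phi>\<^sup>0\<close> and \<open>\<Phi>\<^sup>1\<close> provide an automorphism fixing \<open>u\<^sub>0\<close> and swapping its edges to
  \<open>u\<^sub>1\<close> and \<open>v\<^sub>1\<close>, which is the flip of a set \<open>A\<close> with \<open>0 \<notin> A\<close> and \<open>1, n - 1 \<in> A\<close>, and an
  automorphism rotating the blocks. Thus \<open>T\<close> is closed under symmetric difference and rotation,
  and the gap property forces \<open>T = {{}, A, A + 1, A \<triangle> (A + 1)}\<close>. Rotating \<open>A + 1\<close> once more
  yields \<open>A\<close> or \<open>A \<triangle> (A + 1)\<close>, so \<open>A\<close> is periodic with period 2 or 3; the period divides \<open>n\<close>,
  as otherwise rotation invariance would make \<open>A\<close> empty or everything.
\<close>

definition csucc :: "nat \<Rightarrow> nat \<Rightarrow> nat" where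
  "csucc n j = (j + 1) mod n"

definition cpred :: "nat \<Rightarrow> nat \<Rightarrow> nat" where
  "cpred n j = (if j = 0 then n - 1 else j - 1)"

lemma card_2_cases:
  assumes "card A = 2" "a \<in> A" "b \<in> A" "a \<noteq> b" "c \<in> A"
  shows "c = a \<or> c = b"
proof -
  obtain x y where "A = {x, y}" using assms(1) by (auto simp: card_2_iff)
  then show ?thesis using assms(2-5) by blast
qed

lemma csucc_eq: "j < n \<Longrightarrow> csucc n j = (if j + 1 = n then 0 else j + 1)"
  by (auto simp: csucc_def)

lemma csucc_less: "j + 1 < n \<Longrightarrow> csucc n j = j + 1"
  by (simp add: csucc_def)

lemma csucc_lt: "0 < n \<Longrightarrow> csucc n j < n"
  by (simp add: csucc_def)

lemma csucc_mod: "csucc n (a mod n) = (a + 1) mod n"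
  by (simp add: csucc_def mod_Suc_eq)

lemma csucc_inj: "i < n \<Longrightarrow> j < n \<Longrightarrow> csucc n i = csucc n j \<Longrightarrow> i = j"
  by (auto simp: csucc_eq split: if_splits)

lemma csucc_cpred: "j < n \<Longrightarrow> csucc n (cpred n j) = j"
  by (auto simp: cpred_def csucc_eq)

lemma cpred_csucc: "i < n \<Longrightarrow> cpred n (csucc n i) = i"
  by (auto simp: cpred_def csucc_eq)

lemma cpred_lt: "j < n \<Longrightarrow> cpred n j < n"
  by (auto simp: cpred_def)

lemma csucc_image_mem:
  assumes "S \<subseteq> {..<n}" "j < n"
  shows "j \<in> csucc n ` S \<longleftrightarrow> cpred n j \<in> S"
proof
  assume "j \<in> csucc n ` S"
  then obtain i where "i \<in> S" "j = csucc n i" by blast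
  then show "cpred n j \<in> S" using assms(1) cpred_csucc by auto
next
  assume "cpred n j \<in> S"
  then show "j \<in> csucc n ` S" using csucc_cpred[OF assms(2)] by (metis imageI)
qed

lemma csucc_mem_csucc_image:
  assumes "S \<subseteq> {..<n}" "j < n"
  shows "csucc n j \<in> csucc n ` S \<longleftrightarrow> j \<in> S"
  using csucc_image_mem[OF assms(1) csucc_lt] assms(2) by (simp add: cpred_csucc)

lemma csucc_image_inj:
  assumes "S \<subseteq> {..<n}" "S' \<subseteq> {..<n}" "csucc n ` S = csucc n ` S'"
  shows "S = S'"
proof -
  have "j \<in> S \<longleftrightarrow> j \<in> S'" for j
    using assms csucc_mem_csucc_image[OF assms(1)] csucc_mem_csucc_image[OF assms(2)]
    by (cases "j < n") auto
  then show ?thesis by blast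
qed

lemma csucc_image_Collect:
  "csucc n ` {j. j < n \<and> P j} = {j. j < n \<and> P (cpred n j)}"
proof -
  have "j \<in> csucc n ` {j. j < n \<and> P j} \<longleftrightarrow> j < n \<and> P (cpred n j)" for j
  proof (cases "j < n")
    case True
    then show ?thesis using csucc_image_mem[of "{j. j < n \<and> P j}" n j] cpred_lt by auto
  next
    case False
    then show ?thesis using csucc_lt[of n] by (cases "n = 0") (auto simp: csucc_def)
  qed
  then show ?thesis by blast
qed

lemma csucc_funpow_image_subset:
  "S \<subseteq> {..<n} \<Longrightarrow> (image (csucc n) ^^ k) S \<subseteq> {..<n}"
  by (induction k) (auto simp: csucc_def)

lemma csucc_funpow_image_mem:
  assumes "S \<subseteq> {..<n}" "j < n"
  shows "(j + k) mod n \<in> (image (csucc n) ^^ k) S \<longleftrightarrow> j \<in> S"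
proof (induction k)
  case 0
  then show ?case using assms(2) by simp
next
  case (Suc k)
  have "(j + Suc k) mod n = csucc n ((j + k) mod n)" by (simp add: csucc_mod)
  moreover have "(j + k) mod n < n" using assms(2) by simp
  ultimately show ?case
    using csucc_mem_csucc_image[OF csucc_funpow_image_subset[OF assms(1)]] Suc by simp
qed

lemma rotation_invariant_mem_mod:
  assumes "S \<subseteq> {..<n}" "0 < p" "(image (csucc n) ^^ p) S = S" "j < n"
  shows "j \<in> S \<longleftrightarrow> j mod p \<in> S"
  using assms(4)
proof (induction j rule: less_induct)
  case (less j)
  show ?case
  proof (cases "j < p")
    case False
    then have "j - p < n" "j - p < j" "(j - p + p) mod n = j" using less.prems assms(2) by auto
    then show ?thesis
      using less.IH csucc_funpow_image_mem[OF assms(1), of "j - p" p] assms(3) False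
      by (simp add: le_mod_geq)
  qed simp
qed

lemma rotation_invariant_period_2:
  assumes "S \<subseteq> {..<n}" "(image (csucc n) ^^ 2) S = S" "0 \<notin> S" "1 \<in> S" "n - 1 \<in> S"
  shows "S = {j. j < n \<and> odd j}" "even n"
proof -
  have mem: "j \<in> S \<longleftrightarrow> odd j" if "j < n" for j
    using rotation_invariant_mem_mod[OF assms(1) _ assms(2) that] assms(3,4)
    by (cases "even j") (auto simp: odd_iff_mod_2_eq_one even_iff_mod_2_eq_zero)
  show "S = {j. j < n \<and> odd j}" using mem assms(1) by auto
  have "n - 1 < n" "0 < n" using assms(1,5) by auto
  then show "even n" using mem assms(5) by simp
qed

lemma rotation_invariant_period_3:
  assumes "S \<subseteq> {..<n}" "(image (csucc n) ^^ 3) S = S"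
    and "0 \<notin> S" "1 \<in> S" "2 \<in> S" "n - 1 \<in> S"
  shows "S = {j. j < n \<and> j mod 3 \<noteq> 0}" "3 dvd n"
proof -
  have mem: "j \<in> S \<longleftrightarrow> j mod 3 \<noteq> 0" if "j < n" for j
  proof -
    have "j mod 3 = 0 \<or> j mod 3 = 1 \<or> j mod 3 = 2" by auto
    then show ?thesis using rotation_invariant_mem_mod[OF assms(1) _ assms(2) that] assms(3-5) by auto
  qed
  show "S = {j. j < n \<and> j mod 3 \<noteq> 0}" using mem assms(1) by auto
  have n: "2 < n" using assms(1,5) by auto
  show "3 dvd n"
  proof (rule ccontr)
    assume "\<not> 3 dvd n"
    then have "n mod 3 = 1 \<or> n mod 3 = 2" by presburger
    then consider "n mod 3 = 1" | "n mod 3 = 2" by blast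
    then show False
    proof cases
      case 1
      then have "(n - 1) mod 3 = 0" using n by presburger
      then show False using mem[of "n - 1"] assms(6) n by simp
    next
      case 2
      then have "(n - 2) mod 3 = 0" "(n - 2 + 3) mod n = 1" using n by (presburger, simp add: mod_if)
      then show False
        using mem[of "n - 2"] csucc_funpow_image_mem[OF assms(1), of "n - 2" 3] assms(2,4) n by simp
    qed
  qed
qed

lemma csucc_odd_even:
  "even n \<Longrightarrow> csucc n ` {j. j < n \<and> odd j} = {j. j < n \<and> even j}"
  by (auto simp: csucc_image_Collect cpred_def)

lemma csucc_mod_3:
  "3 dvd n \<Longrightarrow> csucc n ` {j. j < n \<and> j mod 3 \<noteq> 0} = {j. j < n \<and> j mod 3 \<noteq> 1}"
  unfolding csucc_image_Collect cpred_def by (rule Collect_cong) presburger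

lemma cycle_hom_is_rotation:
  assumes n: "3 \<le> n" and lt: "\<forall>j<n. \<beta> j < n"
    and inj: "\<forall>i<n. \<forall>j<n. \<beta> i = \<beta> j \<longrightarrow> i = j"
    and adj: "\<forall>j<n. \<beta> (csucc n j) = csucc n (\<beta> j) \<or> \<beta> j = csucc n (\<beta> (csucc n j))"
    and c: "\<beta> 0 = c" "\<beta> 1 = csucc n c"
  shows "\<forall>j<n. \<beta> j = (j + c) mod n"
proof -
  have step: "j + 1 < n \<longrightarrow> \<beta> j = (j + c) mod n \<and> \<beta> (j + 1) = (j + 1 + c) mod n" for j
  proof (induction j)
    case 0
    have "c < n" using lt n c(1) by auto
    then show ?case using c by (simp add: csucc_def add.commute)
  next
    case (Suc j)
    show ?case
    proof
      assume j2: "Suc j + 1 < n"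
      then have IH: "\<beta> j = (j + c) mod n" "\<beta> (j + 1) = (j + 1 + c) mod n" using Suc by auto
      have j1: "j + 1 < n" "j < n" "j + 2 < n" using j2 by auto
      have "\<beta> (j + 2) = csucc n (\<beta> (j + 1)) \<or> \<beta> (j + 1) = csucc n (\<beta> (j + 2))"
        using adj[rule_format, OF j1(1)] csucc_less[of "j + 1" n] j2 by simp
      moreover have "\<beta> (j + 1) \<noteq> csucc n (\<beta> (j + 2))"
      proof
        assume "\<beta> (j + 1) = csucc n (\<beta> (j + 2))"
        moreover have "csucc n (\<beta> j) = \<beta> (j + 1)" using IH by (simp add: csucc_mod)
        ultimately have "\<beta> j = \<beta> (j + 2)" using csucc_inj lt j1 by metis
        then show False using inj j1 by fastforce
      qed
      ultimately have "\<beta> (j + 2) = (j + 2 + c) mod n" using IH by (simp add: csucc_mod)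
      then show "\<beta> (Suc j) = (Suc j + c) mod n \<and> \<beta> (Suc j + 1) = (Suc j + 1 + c) mod n"
        using IH by simp
    qed
  qed
  show ?thesis
  proof (intro allI impI)
    fix j assume j: "j < n"
    show "\<beta> j = (j + c) mod n"
    proof (cases "j + 1 < n")
      case False
      then have "j = (j - 1) + 1" "(j - 1) + 1 < n" using j n by auto
      then show ?thesis using step[of "j - 1"] by metis
    qed (use step in blast)
  qed
qed

lemma RE_iff: "e \<in> RE n \<longleftrightarrow> (\<exists>i a b. i < n \<and> e = {(i, a), (csucc n i, b)})"
  by (auto simp: RE_def csucc_def)

lemma doubleton_in_RE_iff:
  assumes "0 < n"
  shows "{(i, a), (j, b)} \<in> RE n \<longleftrightarrow> i < n \<and> j < n \<and> (j = csucc n i \<or> i = csucc n j)"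
proof
  assume "{(i, a), (j, b)} \<in> RE n"
  then obtain i' a' b' where "i' < n" "{(i, a), (j, b)} = {(i', a'), (csucc n i', b')}"
    unfolding RE_iff by blast
  then show "i < n \<and> j < n \<and> (j = csucc n i \<or> i = csucc n j)"
    using csucc_lt[OF assms] by (auto simp: doubleton_eq_iff)
next
  assume h: "i < n \<and> j < n \<and> (j = csucc n i \<or> i = csucc n j)"
  then have "{(i, a), (j, b)} = {(i, a), (csucc n i, b)} \<or> {(i, a), (j, b)} = {(j, b), (csucc n j, a)}"
    by auto
  then show "{(i, a), (j, b)} \<in> RE n" using h unfolding RE_iff by blast
qed

lemma flipN_apply: "flipN n S (j, b) = (if j < n \<and> j \<in> S then (j, \<not> b) else (j, b))"
  by (simp add: flipN_def)

lemma flipN_flipN: "flipN n S (flipN n S x) = x"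
  by (cases x) (simp add: flipN_apply)

lemma flipN_comp: "flipN n S \<circ> flipN n S' = flipN n (sym_diff S S')"
  by (rule ext) (auto simp: flipN_apply)

lemma flipN_empty: "flipN n {} = id"
  by (rule ext) (auto simp: flipN_apply)

locale rose_window_map =
  fixes n :: nat and F :: "(nat \<times> bool) set set set"
  assumes n_ge_3: "3 \<le> n" and n_neq_4: "n \<noteq> 4"
    and polytopal: "polytopal_map (RV n) (RE n) F"
begin

abbreviation "V \<equiv> RV n"
abbreviation "E \<equiv> RE n"
abbreviation "G \<equiv> map_aut (RV n) (RE n) F"

definition face_image :: "(nat \<times> bool \<Rightarrow> nat \<times> bool) \<Rightarrow> (nat \<times> bool) set set \<Rightarrow> (nat \<times> bool) set set"
  where "face_image g f = (\<lambda>e. g ` e) ` f"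

lemma n_pos: "0 < n"
  using n_ge_3 by simp

lemma csucc_0: "csucc n 0 = 1"
  using n_ge_3 by (simp add: csucc_def)

lemma csucc_last: "csucc n (n - 1) = 0"
  using n_ge_3 by (simp add: csucc_def)

lemma V_iff: "x \<in> V \<longleftrightarrow> fst x < n"
  by (cases x) (auto simp: RV_def)

lemma adjacent_iff:
  "{x, z} \<in> E \<longleftrightarrow> fst x < n \<and> fst z < n \<and> (fst z = csucc n (fst x) \<or> fst x = csucc n (fst z))"
  using doubleton_in_RE_iff[OF n_pos, of "fst x" "snd x" "fst z" "snd z"] by simp

lemma edge_subset_V: "e \<in> E \<Longrightarrow> e \<subseteq> V"
  using csucc_lt[OF n_pos] by (auto simp: RE_iff V_iff)

lemma face_subset_E: "f \<in> F \<Longrightarrow> f \<subseteq> E"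
  using polytopal by (auto simp: polytopal_map_def is_cycle_edges_def)

lemma card_face_edges_at:
  assumes "f \<in> F" "e \<in> f" "v \<in> e"
  shows "card {e\<in>f. v \<in> e} = 2"
proof -
  have "is_cycle_edges E f" using polytopal assms(1) by (auto simp: polytopal_map_def)
  moreover have "v \<in> \<Union>f" using assms by blast
  ultimately show ?thesis unfolding is_cycle_edges_def by blast
qed

lemma card_faces_at_edge: "e \<in> E \<Longrightarrow> card {f\<in>F. e \<in> f} = 2"
  using polytopal by (auto simp: polytopal_map_def)

lemma edge_in_face:
  assumes "e \<in> E" obtains f where "f \<in> F" "e \<in> f"
  using card_faces_at_edge[OF assms] by (metis (no_types, lifting) card.empty empty_Collect_eq zero_neq_numeral)

lemma vertex_link_connected:
  assumes "v \<in> V" "A \<subseteq> {e\<in>E. v \<in> e}" "A \<noteq> {}"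
    and "\<And>e e' f. e \<in> A \<Longrightarrow> e' \<in> E \<Longrightarrow> v \<in> e' \<Longrightarrow> f \<in> F \<Longrightarrow> e \<in> f \<Longrightarrow> e' \<in> f \<Longrightarrow> e' \<in> A"
  shows "A = {e\<in>E. v \<in> e}"
proof -
  have "\<forall>v\<in>V. \<forall>A. A \<subseteq> {e\<in>E. v \<in> e} \<and> A \<noteq> {} \<and>
        (\<forall>e\<in>A. \<forall>e'\<in>{e\<in>E. v \<in> e}. (\<exists>f\<in>F. e \<in> f \<and> e' \<in> f) \<longrightarrow> e' \<in> A)
        \<longrightarrow> A = {e\<in>E. v \<in> e}"
    using polytopal unfolding polytopal_map_def by (elim conjE)
  moreover have "\<forall>e\<in>A. \<forall>e'\<in>{e\<in>E. v \<in> e}. (\<exists>f\<in>F. e \<in> f \<and> e' \<in> f) \<longrightarrow> e' \<in> A"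
    using assms(4) by blast
  ultimately show ?thesis using assms(1-3) by blast
qed

lemma flag_act_simp: "flag_act g (v, e, f) = (g v, g ` e, face_image g f)"
  by (simp add: flag_act_def face_image_def)

lemma flagsI: "f \<in> F \<Longrightarrow> e \<in> f \<Longrightarrow> v \<in> e \<Longrightarrow> (v, e, f) \<in> flags F"
  by (simp add: flags_def)

lemma flag0_eq:
  assumes "f \<in> F" "e \<in> f" "e = {v, w}" "v \<noteq> w"
  shows "flag0 F (v, e, f) = (w, e, f)"
  unfolding flag0_def
proof (rule the_equality)
  fix \<Psi> :: "(nat \<times> bool) flag"
  assume "\<Psi> \<in> flags F \<and> fst \<Psi> \<noteq> fst (v, e, f) \<and> snd \<Psi> = snd (v, e, f)"
  then show "\<Psi> = (w, e, f)" using assms(3) by (cases \<Psi>) (auto simp: flags_def)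
qed (use assms in \<open>simp add: flags_def\<close>)

lemma flag1_eq:
  assumes "f \<in> F" "e \<in> f" "v \<in> e" "e' \<in> f" "v \<in> e'" "e' \<noteq> e"
  shows "flag1 F (v, e, f) = (v, e', f)"
  unfolding flag1_def
proof (rule the_equality)
  fix \<Psi> :: "(nat \<times> bool) flag"
  assume h: "\<Psi> \<in> flags F \<and> fst \<Psi> = fst (v, e, f) \<and> fst (snd \<Psi>) \<noteq> fst (snd (v, e, f))
      \<and> snd (snd \<Psi>) = snd (snd (v, e, f))"
  obtain b where "\<Psi> = (v, b, f)" "b \<in> f" "v \<in> b" "b \<noteq> e"
    using h by (cases \<Psi>) (auto simp: flags_def)
  moreover have "b = e \<or> b = e'"
    using card_2_cases[OF card_face_edges_at[OF assms(1-3)], of e e' b] assms \<open>b \<in> f\<close> \<open>v \<in> b\<close> by auto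
  ultimately show "\<Psi> = (v, e', f)" by auto
qed (use assms in \<open>simp add: flags_def\<close>)

lemma flag2_eq:
  assumes "f \<in> F" "e \<in> f" "v \<in> e" "f' \<in> F" "e \<in> f'" "f' \<noteq> f"
  shows "flag2 F (v, e, f) = (v, e, f')"
  unfolding flag2_def
proof (rule the_equality)
  fix \<Psi> :: "(nat \<times> bool) flag"
  assume h: "\<Psi> \<in> flags F \<and> fst \<Psi> = fst (v, e, f) \<and> fst (snd \<Psi>) = fst (snd (v, e, f))
      \<and> snd (snd \<Psi>) \<noteq> snd (snd (v, e, f))"
  obtain c where "\<Psi> = (v, e, c)" "c \<in> F" "e \<in> c" "c \<noteq> f"
    using h by (cases \<Psi>) (auto simp: flags_def)
  moreover have "e \<in> E" using assms face_subset_E by blast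
  ultimately have "c = f'"
    using card_2_cases[OF card_faces_at_edge, of e f f' c] assms by auto
  then show "\<Psi> = (v, e, f')" using \<open>\<Psi> = (v, e, c)\<close> by simp
qed (use assms in \<open>simp add: flags_def\<close>)

lemma face_image_comp: "face_image (g \<circ> h) f = face_image g (face_image h f)"
  by (auto simp: face_image_def image_comp)

lemma aut_bij: "g \<in> G \<Longrightarrow> bij_betw g V V"
  by (simp add: map_aut_def)

lemma aut_outside: "g \<in> G \<Longrightarrow> x \<notin> V \<Longrightarrow> g x = x"
  unfolding map_aut_def mem_Collect_eq by (elim conjE) blast

lemma aut_edge_image: "g \<in> G \<Longrightarrow> (\<lambda>e. g ` e) ` E = E"
  by (simp add: map_aut_def)

lemma aut_face_image: "g \<in> G \<Longrightarrow> face_image g ` F = F"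
  by (simp add: map_aut_def face_image_def)

lemma aut_in_V: "g \<in> G \<Longrightarrow> x \<in> V \<Longrightarrow> g x \<in> V"
  using aut_bij bij_betwE by blast

lemma aut_inj: "g \<in> G \<Longrightarrow> x \<in> V \<Longrightarrow> y \<in> V \<Longrightarrow> g x = g y \<Longrightarrow> x = y"
  using aut_bij bij_betw_imp_inj_on inj_onD by metis

lemma aut_surj: "g \<in> G \<Longrightarrow> y \<in> V \<Longrightarrow> \<exists>x\<in>V. g x = y"
  using aut_bij bij_betw_imp_surj_on by (metis imageE)

lemma aut_edge: "g \<in> G \<Longrightarrow> e \<in> E \<Longrightarrow> g ` e \<in> E"
  using aut_edge_image by blast

lemma aut_face: "g \<in> G \<Longrightarrow> f \<in> F \<Longrightarrow> face_image g f \<in> F"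
  using aut_face_image by blast

lemma aut_edge_image_inj:
  assumes "g \<in> G" "e \<in> E" "e' \<in> E" "g ` e = g ` e'"
  shows "e = e'"
  using inj_on_image_eq_iff[OF bij_betw_imp_inj_on[OF aut_bij]] edge_subset_V assms by metis

lemma id_aut: "id \<in> G"
  by (simp add: map_aut_def)

lemma comp_aut:
  assumes "g \<in> G" "h \<in> G"
  shows "g \<circ> h \<in> G"
proof -
  have "bij_betw (g \<circ> h) V V" using aut_bij assms bij_betw_trans by blast
  moreover have "(\<lambda>e. (g \<circ> h) ` e) ` E = (\<lambda>e. g ` e) ` ((\<lambda>e. h ` e) ` E)"
    by (auto simp: image_comp)
  then have "(\<lambda>e. (g \<circ> h) ` e) ` E = E" using aut_edge_image assms by simp
  moreover have "face_image (g \<circ> h) ` F = face_image g ` (face_image h ` F)"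
    by (simp add: face_image_comp image_image)
  then have "face_image (g \<circ> h) ` F = F" using aut_face_image assms by simp
  ultimately show ?thesis using aut_outside assms unfolding map_aut_def face_image_def by auto
qed

lemma aut_adjacent_iff:
  assumes g: "g \<in> G" and "x \<in> V" "z \<in> V"
  shows "{g x, g z} \<in> E \<longleftrightarrow> {x, z} \<in> E"
proof
  assume "{g x, g z} \<in> E"
  then obtain e where e: "e \<in> E" "g ` e = {g x, g z}" using aut_edge_image[OF g] by (metis imageE)
  have "inj_on g V" using aut_bij[OF g] bij_betw_imp_inj_on by blast
  moreover have "g ` e = g ` {x, z}" using e by simp
  ultimately have "e = {x, z}" using inj_on_image_eq_iff[of g V e "{x, z}"] e edge_subset_V assms by blast
  then show "{x, z} \<in> E" using e by simp
next
  assume "{x, z} \<in> E"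
  then show "{g x, g z} \<in> E" using aut_edge[OF g] by fastforce
qed

lemma aut_other_end:
  assumes "g \<in> G" "x \<in> V" "y \<in> V" "x \<noteq> y" "g x = x'" "g ` {x, y} = {x', z}"
  shows "g y = z"
proof -
  have "g y \<in> {x', z}" using assms(6) by blast
  moreover have "g y \<noteq> x'" using aut_inj[OF assms(1,3,2)] assms(4,5) by auto
  ultimately show ?thesis by blast
qed

text \<open>This is where \<open>n \<noteq> 4\<close> is needed: for \<open>n = 4\<close> the blocks \<open>i\<close> and \<open>i + 2\<close>
  have the same neighbourhood.\<close>

lemma same_neighbours_same_block:
  assumes x: "x \<in> V" and y: "y \<in> V" and N: "\<forall>z\<in>V. {x, z} \<in> E \<longleftrightarrow> {y, z} \<in> E"
  shows "fst x = fst y"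
proof (rule ccontr)
  assume ne: "fst x \<noteq> fst y"
  define i where "i = fst x"
  define j where "j = fst y"
  have i: "i < n" and j: "j < n" using x y V_iff i_def j_def by auto
  have "(csucc n i, False) \<in> V" "{x, (csucc n i, False)} \<in> E"
    using adjacent_iff i i_def csucc_lt[OF n_pos] V_iff by simp_all
  then have "{y, (csucc n i, False)} \<in> E" using N by blast
  then have "csucc n i = csucc n j \<or> j = csucc n (csucc n i)" using adjacent_iff j_def by simp
  then have j2: "j = csucc n (csucc n i)" using csucc_inj[OF i j] ne i_def j_def by blast
  define p where "p = cpred n i"
  have p: "p < n" "csucc n p = i" using cpred_lt csucc_cpred i p_def by auto
  have "(p, False) \<in> V" "{x, (p, False)} \<in> E" using adjacent_iff i i_def p V_iff by simp_all
  then have "{y, (p, False)} \<in> E" using N by blast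
  then have "p = csucc n j \<or> j = csucc n p" using adjacent_iff j_def by simp
  then have "csucc n (csucc n (csucc n (csucc n i))) = i" using p ne i_def j_def j2 by auto
  moreover have "csucc n (csucc n (csucc n (csucc n i))) = (i + 4) mod n"
    by (simp add: csucc_def mod_Suc_eq add.commute[of i] numeral_eq_Suc)
  ultimately have "(i + 4) mod n = i mod n" using i by simp
  then have "n dvd 4" using mod_eq_dvd_iff_nat[of i "i + 4" n] by simp
  then show False using n_ge_3 n_neq_4 dvd_imp_le[of n 4] by (cases "n = 3") auto
qed

definition block_map :: "(nat \<times> bool \<Rightarrow> nat \<times> bool) \<Rightarrow> nat \<Rightarrow> nat" where
  "block_map g j = fst (g (j, False))"

lemma fst_aut_block:
  assumes g: "g \<in> G" and j: "j < n"
  shows "fst (g (j, b)) = block_map g j"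
proof -
  have xV: "(j, b) \<in> V" "(j, False) \<in> V" using j V_iff by auto
  have same: "\<forall>z\<in>V. {(j, b), z} \<in> E \<longleftrightarrow> {(j, False), z} \<in> E" using adjacent_iff by simp
  have "\<forall>z\<in>V. {g (j, b), z} \<in> E \<longleftrightarrow> {g (j, False), z} \<in> E"
  proof
    fix z assume "z \<in> V"
    then obtain z' where z': "z' \<in> V" "g z' = z" using aut_surj[OF g] by blast
    show "{g (j, b), z} \<in> E \<longleftrightarrow> {g (j, False), z} \<in> E"
      using aut_adjacent_iff[OF g xV(1) z'(1)] aut_adjacent_iff[OF g xV(2) z'(1)] same z' by auto
  qed
  then show ?thesis
    using same_neighbours_same_block[OF aut_in_V[OF g xV(1)] aut_in_V[OF g xV(2)]] block_map_def by simp
qed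

lemma aut_on_block:
  assumes g: "g \<in> G" and j: "j < n"
  shows "\<exists>p. \<forall>b. g (j, b) = (block_map g j, b \<noteq> p)"
proof -
  define p where "p = snd (g (j, False))"
  have "(j, False) \<in> V" "(j, True) \<in> V" using j V_iff by auto
  then have ne: "g (j, False) \<noteq> g (j, True)" using aut_inj[OF g] by blast
  have gF: "g (j, False) = (block_map g j, p)" by (simp add: p_def block_map_def)
  have "g (j, True) = (block_map g j, snd (g (j, True)))"
    using fst_aut_block[OF g j, of True] by (metis prod.collapse)
  then have "g (j, True) = (block_map g j, \<not> p)" using ne gF by (cases "snd (g (j, True))") auto
  then have "g (j, b) = (block_map g j, b \<noteq> p)" for b using gF by (cases b) auto
  then show ?thesis by blast
qed

lemma block_map_lt: "g \<in> G \<Longrightarrow> j < n \<Longrightarrow> block_map g j < n"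
  using aut_in_V[of g "(j, False)"] V_iff block_map_def by simp

lemma block_map_inj:
  assumes g: "g \<in> G" and i: "i < n" and j: "j < n" and eq: "block_map g i = block_map g j"
  shows "i = j"
proof -
  obtain p where p: "\<And>b. g (i, b) = (block_map g i, b \<noteq> p)"
    using aut_on_block[OF g i] by blast
  obtain q where q: "\<And>b. g (j, b) = (block_map g j, b \<noteq> q)"
    using aut_on_block[OF g j] by blast
  have "g (i, p \<noteq> q) = g (j, False)" using p q eq by auto
  moreover have "(i, p \<noteq> q) \<in> V" "(j, False) \<in> V" using i j V_iff by auto
  ultimately have "(i, p \<noteq> q) = (j, False)" using aut_inj[OF g] by blast
  then show ?thesis by simp
qed

lemma block_map_adjacent:
  assumes g: "g \<in> G" and j: "j < n"
  shows "block_map g (csucc n j) = csucc n (block_map g j) \<or> block_map g j = csucc n (block_map g (csucc n j))"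
proof -
  have V2: "(j, False) \<in> V" "(csucc n j, False) \<in> V" using j V_iff csucc_lt[OF n_pos] by auto
  have "{(j, False), (csucc n j, False)} \<in> E" using adjacent_iff j csucc_lt[OF n_pos] by simp
  then have "{g (j, False), g (csucc n j, False)} \<in> E" using aut_adjacent_iff[OF g V2] by simp
  then show ?thesis using adjacent_iff block_map_def by simp
qed

lemma block_map_comp:
  assumes "g \<in> G" "h \<in> G" "j < n"
  shows "block_map (h \<circ> g) j = block_map h (block_map g j)"
proof -
  have "block_map (h \<circ> g) j = fst (h (block_map g j, snd (g (j, False))))"
    by (simp add: block_map_def)
  also have "\<dots> = block_map h (block_map g j)"
    by (rule fst_aut_block[OF assms(2) block_map_lt[OF assms(1,3)]])
  finally show ?thesis .
qed

lemma block_map_rotation: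
  assumes "g \<in> G" "block_map g 0 = c" "block_map g 1 = csucc n c"
  shows "\<forall>j<n. block_map g j = (j + c) mod n"
  using cycle_hom_is_rotation[OF n_ge_3 _ _ _ assms(2,3)]
    block_map_lt[OF assms(1)] block_map_inj[OF assms(1)] block_map_adjacent[OF assms(1)] by blast

lemma aut_eq_flipN:
  assumes g: "g \<in> G" and id: "\<forall>j<n. block_map g j = j"
  shows "g = flipN n {j. j < n \<and> snd (g (j, False))}"
proof
  fix x :: "nat \<times> bool"
  obtain j b where x: "x = (j, b)" by (cases x)
  show "g x = flipN n {j. j < n \<and> snd (g (j, False))} x"
  proof (cases "j < n")
    case True
    obtain p where "\<And>b. g (j, b) = (block_map g j, b \<noteq> p)"
      using aut_on_block[OF g True] by blast
    then show ?thesis using id True x by (auto simp: flipN_apply)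
  next
    case False
    then show ?thesis using aut_outside[OF g] V_iff x by (simp add: flipN_apply)
  qed
qed

lemma aut_comp_flipN:
  assumes g: "g \<in> G" and S: "S \<subseteq> {..<n}"
  shows "g \<circ> flipN n S = flipN n (block_map g ` S) \<circ> g"
proof
  fix x :: "nat \<times> bool"
  obtain j b where x: "x = (j, b)" by (cases x)
  show "(g \<circ> flipN n S) x = (flipN n (block_map g ` S) \<circ> g) x"
  proof (cases "j < n")
    case True
    obtain p where gj: "\<And>b. g (j, b) = (block_map g j, b \<noteq> p)"
      using aut_on_block[OF g True] by blast
    have "block_map g j \<in> block_map g ` S \<longleftrightarrow> j \<in> S"
      using block_map_inj[OF g] S True by blast
    then show ?thesis using block_map_lt[OF g True] True
      by (cases "j \<in> S") (simp_all add: x flipN_apply gj)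
  next
    case False
    then show ?thesis using aut_outside[OF g] V_iff x by (simp add: flipN_apply)
  qed
qed

lemma flipN_mem_aut_iff: "flipN n S \<in> G \<longleftrightarrow> face_image (flipN n S) ` F = F"
proof
  have fV: "x \<in> V \<Longrightarrow> flipN n S x \<in> V" for x by (cases x) (simp add: flipN_apply V_iff)
  have fE: "flipN n S ` e \<in> E" if e: "e \<in> E" for e
  proof -
    obtain i a b where "i < n" "e = {(i, a), (csucc n i, b)}" using e unfolding RE_iff by blast
    then show ?thesis
      unfolding RE_iff using csucc_lt[OF n_pos] by (auto simp: flipN_apply intro!: exI[of _ i])
  qed
  have "bij_betw (flipN n S) V V"
    by (rule bij_betw_byWitness[where f'="flipN n S"]) (auto simp: flipN_flipN fV)
  moreover have "x \<notin> V \<Longrightarrow> flipN n S x = x" for x by (cases x) (simp add: flipN_apply V_iff)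
  moreover have "(\<lambda>e. flipN n S ` e) ` E = E"
  proof
    show "E \<subseteq> (\<lambda>e. flipN n S ` e) ` E"
    proof
      fix e assume "e \<in> E"
      moreover have "e = flipN n S ` (flipN n S ` e)" by (simp add: image_comp flipN_flipN comp_def)
      ultimately show "e \<in> (\<lambda>e. flipN n S ` e) ` E" using fE by blast
    qed
  qed (use fE in blast)
  moreover assume "face_image (flipN n S) ` F = F"
  ultimately show "flipN n S \<in> G" unfolding map_aut_def face_image_def by blast
qed (rule aut_face_image)

definition aut_flips :: "nat set set" where
  "aut_flips = {S. S \<subseteq> {..<n} \<and> flipN n S \<in> G}"

lemma aut_flips_subset: "S \<in> aut_flips \<Longrightarrow> S \<subseteq> {..<n}"
  by (simp add: aut_flips_def)

lemma empty_in_aut_flips: "{} \<in> aut_flips"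
  using id_aut by (simp add: aut_flips_def flipN_empty)

lemma aut_flips_sym_diff:
  assumes "S \<in> aut_flips" "S' \<in> aut_flips"
  shows "sym_diff S S' \<in> aut_flips"
proof -
  have "flipN n S \<circ> flipN n S' \<in> G" using comp_aut assms by (simp add: aut_flips_def)
  then show ?thesis using assms by (auto simp: aut_flips_def flipN_comp)
qed

lemma aut_flips_block_map_image:
  assumes g: "g \<in> G" and S: "S \<in> aut_flips"
  shows "block_map g ` S \<in> aut_flips"
proof -
  have Sn: "S \<subseteq> {..<n}" and fS: "flipN n S \<in> G" using S aut_flips_def by auto
  let ?S' = "block_map g ` S"
  have "face_image (flipN n ?S') ` F = face_image (flipN n ?S') ` face_image g ` F"
    using aut_face_image[OF g] by simp
  also have "\<dots> = face_image (flipN n ?S' \<circ> g) ` F" by (simp add: face_image_comp image_image)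
  also have "\<dots> = face_image (g \<circ> flipN n S) ` F" using aut_comp_flipN[OF g Sn] by simp
  also have "\<dots> = face_image g ` face_image (flipN n S) ` F" by (simp add: face_image_comp image_image)
  also have "\<dots> = F" using aut_face_image[OF g] aut_face_image[OF fS] by simp
  finally have "flipN n ?S' \<in> G" using flipN_mem_aut_iff by blast
  moreover have "?S' \<subseteq> {..<n}" using block_map_lt[OF g] Sn by auto
  ultimately show ?thesis by (simp add: aut_flips_def)
qed

end

locale rose_window_2_01_map = rose_window_map +
  assumes class_2_01: "class_2_01 (RV n) (RE n) F"
begin

lemma class_2_01_flag:
  assumes "\<Phi> \<in> flags F"
  shows "flag0 F \<Phi> \<in> flag_orbit V E F \<Phi>" "flag1 F \<Phi> \<in> flag_orbit V E F \<Phi>"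
    "flag2 F \<Phi> \<notin> flag_orbit V E F \<Phi>"
  using class_2_01 assms unfolding class_2_01_def by blast+

lemma flag_orbitI: "g \<in> G \<Longrightarrow> flag_act g \<Phi> \<in> flag_orbit V E F \<Phi>"
  by (auto simp: flag_orbit_def)

lemma flag_orbitE: "\<Psi> \<in> flag_orbit V E F \<Phi> \<Longrightarrow> \<exists>g\<in>G. flag_act g \<Phi> = \<Psi>"
  by (auto simp: flag_orbit_def)

lemma aut_fixes_edges_at:
  assumes g: "g \<in> G" and e: "e \<in> E" "v \<in> e" and gv: "g v = v" and ge: "g ` e = e"
    and e': "e' \<in> E" "v \<in> e'"
  shows "g ` e' = e'"
proof -
  have vV: "v \<in> V" using edge_subset_V e by blast
  let ?A = "{e'\<in>E. v \<in> e' \<and> g ` e' = e'}"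
  have "?A = {e'\<in>E. v \<in> e'}"
  proof (rule vertex_link_connected[OF vV])
    show "?A \<noteq> {}" using e ge by blast
    fix e1 e2 f assume h: "e1 \<in> ?A" "e2 \<in> E" "v \<in> e2" "f \<in> F" "e1 \<in> f" "e2 \<in> f"
    have ge1: "g ` e1 = e1" "v \<in> e1" "e1 \<in> E" using h(1) by auto
    txt \<open>Otherwise \<open>g\<close> maps the flag \<open>(v, e1, f)\<close> to its 2-adjacent flag.\<close>
    have gf: "face_image g f = f"
    proof (rule ccontr)
      assume ne: "face_image g f \<noteq> f"
      have "e1 \<in> face_image g f" using h(5) ge1 unfolding face_image_def by (metis imageI)
      then have "flag2 F (v, e1, f) = (v, e1, face_image g f)"
        using flag2_eq[OF h(4,5) ge1(2) aut_face[OF g h(4)]] ne by blast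
      moreover have "flag_act g (v, e1, f) = (v, e1, face_image g f)"
        using ge1 gv by (simp add: flag_act_simp)
      ultimately show False
        using class_2_01_flag(3)[OF flagsI[OF h(4,5) ge1(2)]] flag_orbitI[OF g] by metis
    qed
    show "e2 \<in> ?A"
    proof (cases "e2 = e1")
      case False
      have "g ` e2 \<in> f" using h(6) gf unfolding face_image_def by blast
      moreover have "v \<in> g ` e2" using h(3) gv by (metis imageI)
      moreover have "g ` e2 \<noteq> e1" using aut_edge_image_inj[OF g h(2) ge1(3)] ge1(1) False by auto
      ultimately have "g ` e2 = e2"
        using card_2_cases[OF card_face_edges_at[OF h(4,5) ge1(2)], of e1 e2 "g ` e2"] h ge1 False
        by auto
      then show ?thesis using h by simp
    qed (use h ge1 in simp)
  qed blast
  then show ?thesis using e' by blast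
qed

lemma aut_swaps_edge:
  assumes "{x, y} \<in> E" "x \<noteq> y"
  shows "\<exists>g\<in>G. g x = y \<and> g y = x"
proof -
  obtain f where f: "f \<in> F" "{x, y} \<in> f" using edge_in_face[OF assms(1)] by blast
  have "(y, {x, y}, f) \<in> flag_orbit V E F (x, {x, y}, f)"
    using class_2_01_flag(1)[OF flagsI[OF f insertI1]] flag0_eq[OF f _ assms(2)] by simp
  then obtain g where "g \<in> G" "flag_act g (x, {x, y}, f) = (y, {x, y}, f)"
    using flag_orbitE by blast
  then have g: "g \<in> G" "g x = y" "g ` {x, y} = {x, y}" unfolding flag_act_simp prod.inject by blast+
  have "x \<in> V" "y \<in> V" using edge_subset_V[OF assms(1)] by auto
  then have "g y = x" using aut_other_end[OF g(1) _ _ assms(2) g(2)] g(3) by (simp add: insert_commute)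
  then show ?thesis using g by blast
qed

lemma vertex_stabilizer_transitive:
  assumes "v \<in> V" "e \<in> E" "v \<in> e" "e' \<in> E" "v \<in> e'"
  shows "\<exists>g\<in>G. g v = v \<and> g ` e = e'"
proof -
  let ?O = "{e'\<in>E. v \<in> e' \<and> (\<exists>g\<in>G. g v = v \<and> g ` e = e')}"
  have "?O = {e\<in>E. v \<in> e}"
  proof (rule vertex_link_connected[OF assms(1)])
    have "id v = v" "id ` e = e" by simp_all
    then show "?O \<noteq> {}" using assms(2,3) id_aut by blast
    fix e1 e2 f assume h: "e1 \<in> ?O" "e2 \<in> E" "v \<in> e2" "f \<in> F" "e1 \<in> f" "e2 \<in> f"
    obtain g where g: "g \<in> G" "g v = v" "g ` e = e1" using h(1) by blast
    have ve1: "v \<in> e1" using h(1) by blast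
    show "e2 \<in> ?O"
    proof (cases "e2 = e1")
      case False
      have "(v, e2, f) \<in> flag_orbit V E F (v, e1, f)"
        using class_2_01_flag(2)[OF flagsI[OF h(4,5) ve1]] flag1_eq[OF h(4,5) ve1 h(6,3) False] by simp
      then obtain k where "k \<in> G" "flag_act k (v, e1, f) = (v, e2, f)"
        using flag_orbitE by blast
      then have k: "k \<in> G" "k v = v" "k ` e1 = e2" unfolding flag_act_simp prod.inject by blast+
      have "(k \<circ> g) v = v" using g k by simp
      moreover have "(k \<circ> g) ` e = e2" using g(3) k(3) by (metis image_comp)
      ultimately show ?thesis using comp_aut[OF k(1) g(1)] h(2,3) by blast
    qed (use h(1) in blast)
  qed blast
  then show ?thesis using assms(4,5) by blast
qed

lemma aut_flips_no_gap:
  assumes S: "S \<in> aut_flips" and k: "k < n" "k \<notin> S" "csucc n k \<notin> S"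
  shows "csucc n (csucc n k) \<notin> S"
proof
  assume w: "csucc n (csucc n k) \<in> S"
  define g where "g = flipN n S"
  define x where "x = (csucc n k, False)"
  have g: "g \<in> G" using S g_def aut_flips_def by simp
  have lt: "csucc n k < n" "csucc n (csucc n k) < n" using csucc_lt[OF n_pos] by auto
  have e: "{(k, False), x} \<in> E" "{x, (csucc n (csucc n k), False)} \<in> E"
    using adjacent_iff k lt x_def by simp_all
  have gx: "g x = x" and "g (k, False) = (k, False)" using k g_def x_def by (auto simp: flipN_apply)
  then have "g ` {(k, False), x} = {(k, False), x}" by simp
  then have "g ` {x, (csucc n (csucc n k), False)} = {x, (csucc n (csucc n k), False)}"
    using aut_fixes_edges_at[OF g e(1) _ gx _ e(2)] by simp
  moreover have "g (csucc n (csucc n k), False) = (csucc n (csucc n k), True)"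
    using w lt g_def by (simp add: flipN_apply)
  ultimately have "csucc n (csucc n k) = csucc n k" using x_def by auto
  then have "csucc n k = k" using csucc_inj[OF lt(1) k(1)] by simp
  then show False using k(1) n_ge_3 by (auto simp: csucc_eq split: if_splits)
qed

lemma aut_flips_gap_imp_empty:
  assumes S: "S \<in> aut_flips" and k: "k < n" "k \<notin> S" "csucc n k \<notin> S"
  shows "S = {}"
proof -
  have gap: "(k + m) mod n \<notin> S \<and> (k + m + 1) mod n \<notin> S" for m
  proof (induction m)
    case 0
    then show ?case using k by (simp add: csucc_def)
  next
    case (Suc m)
    then have "csucc n (csucc n ((k + m) mod n)) \<notin> S"
      using aut_flips_no_gap[OF S, of "(k + m) mod n"] n_pos by (simp add: csucc_mod)
    then show ?case using Suc by (simp add: csucc_mod)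
  qed
  show ?thesis
  proof (rule ccontr)
    assume "S \<noteq> {}"
    then obtain x where x: "x \<in> S" by blast
    then have "(k + (x + n - k)) mod n = x" using k aut_flips_subset[OF S] by auto
    then show False using gap[of "x + n - k"] x by simp
  qed
qed

lemma aut_flips_witness: "\<exists>A\<in>aut_flips. 0 \<notin> A \<and> 1 \<in> A \<and> n - 1 \<in> A"
proof -
  define u0 where "u0 = (0::nat, False)"
  define u1 where "u1 = (1::nat, False)"
  define v1 where "v1 = (1::nat, True)"
  have V: "u0 \<in> V" "u1 \<in> V" using n_ge_3 V_iff u0_def u1_def by auto
  have E: "{u0, u1} \<in> E" "{u0, v1} \<in> E" using adjacent_iff u0_def u1_def v1_def csucc_0 n_ge_3 by auto
  obtain g where g: "g \<in> G" "g u0 = u0" "g ` {u0, u1} = {u0, v1}"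
    using vertex_stabilizer_transitive[OF V(1) E(1) _ E(2)] u0_def by blast
  have gu1: "g u1 = v1" using aut_other_end[OF g(1) V _ g(2,3)] u0_def u1_def by simp
  have "block_map g 0 = 0" "block_map g 1 = csucc n 0"
    using g(2) gu1 u0_def u1_def v1_def csucc_0 by (simp_all add: block_map_def)
  then have "\<forall>j<n. block_map g j = j" using block_map_rotation[OF g(1)] by (metis add_0_right mod_less)
  define A where "A = {j. j < n \<and> snd (g (j, False))}"
  have gA: "g = flipN n A" using aut_eq_flipN[OF g(1)] \<open>\<forall>j<n. block_map g j = j\<close> A_def by blast
  moreover have "A \<subseteq> {..<n}" by (auto simp: A_def)
  ultimately have "A \<in> aut_flips" using g(1) by (simp add: aut_flips_def)
  moreover have "0 \<notin> A" "1 \<in> A" using g(2) gu1 n_ge_3 by (auto simp: u0_def u1_def v1_def A_def)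
  moreover have "n - 1 \<in> A"
  proof (rule ccontr)
    assume "n - 1 \<notin> A"
    then have "g (n - 1, False) = (n - 1, False)" by (simp add: gA flipN_apply)
    then have "g ` {u0, (n - 1, False)} = {u0, (n - 1, False)}" using g(2) by simp
    moreover have "{u0, (n - 1, False)} \<in> E" using adjacent_iff u0_def csucc_last n_ge_3 by auto
    ultimately have "g ` {u0, u1} = {u0, u1}"
      using aut_fixes_edges_at[OF g(1) _ insertI1 g(2) _ E(1) insertI1] by blast
    then show False using g(3) u0_def u1_def v1_def by (auto simp: doubleton_eq_iff)
  qed
  ultimately show ?thesis by blast
qed

text \<open>Composing the reflection of the edge \<open>{u0, u1}\<close> with an automorphism fixing \<open>u0\<close>
  and moving \<open>u1\<close> to block \<open>n - 1\<close> rotates the blocks.\<close>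

lemma rotation_aut: "\<exists>g\<in>G. \<forall>j<n. block_map g j = csucc n j"
proof -
  define u0 where "u0 = (0::nat, False)"
  define u1 where "u1 = (1::nat, False)"
  define w where "w = (n - 1, False)"
  have V: "u0 \<in> V" "u1 \<in> V" using n_ge_3 V_iff u0_def u1_def by auto
  have E: "{u0, u1} \<in> E" "{u0, w} \<in> E" using adjacent_iff u0_def u1_def w_def csucc_0 csucc_last n_ge_3
    by auto
  have lt: "1 < n" "n - 1 < n" "0 < n" using n_ge_3 by auto
  obtain h where h: "h \<in> G" "h u0 = u1" "h u1 = u0"
    using aut_swaps_edge[OF E(1)] u0_def u1_def by auto
  obtain k where k: "k \<in> G" "k u0 = u0" "k ` {u0, u1} = {u0, w}"
    using vertex_stabilizer_transitive[OF V(1) E(1) _ E(2)] by blast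
  have "k u1 = w" using aut_other_end[OF k(1) V _ k(2,3)] u0_def u1_def by simp
  then have bk: "block_map k 0 = 0" "block_map k 1 = n - 1"
    using k(2) u0_def u1_def w_def by (simp_all add: block_map_def)
  have bh: "block_map h 0 = 1" "block_map h 1 = 0" using h u0_def u1_def by (simp_all add: block_map_def)
  have "block_map h (n - 1) = csucc n 1"
  proof -
    have "block_map h (n - 1) \<noteq> 0"
    proof
      assume "block_map h (n - 1) = 0"
      then have "n - 1 = 1" using block_map_inj[OF h(1) lt(2,1)] bh(2) by simp
      then show False using n_ge_3 by simp
    qed
    then have "csucc n (block_map h (n - 1)) \<noteq> csucc n 0"
      using csucc_inj[OF block_map_lt[OF h(1) lt(2)] lt(3)] by metis
    then show ?thesis using block_map_adjacent[OF h(1) lt(2)] bh(1) csucc_last csucc_0 by auto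
  qed
  then have "block_map (h \<circ> k) 0 = 1" "block_map (h \<circ> k) 1 = csucc n 1"
    using block_map_comp[OF k(1) h(1)] bh bk lt by simp_all
  then have "\<forall>j<n. block_map (h \<circ> k) j = (j + 1) mod n"
    by (rule block_map_rotation[OF comp_aut[OF h(1) k(1)]])
  then show ?thesis using comp_aut[OF h(1) k(1)] by (auto simp: csucc_def)
qed

lemma aut_flips_csucc_image:
  assumes "S \<in> aut_flips"
  shows "csucc n ` S \<in> aut_flips"
proof -
  obtain g where g: "g \<in> G" "\<forall>j<n. block_map g j = csucc n j" using rotation_aut by blast
  have "block_map g ` S = csucc n ` S" using g(2) aut_flips_subset[OF assms] by (intro image_cong refl) auto
  then show ?thesis using aut_flips_block_map_image[OF g(1) assms] by simp
qed

lemma aut_flips_nonempty_0_notin: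
  assumes W: "W \<in> aut_flips" "W \<noteq> {}" "0 \<notin> W"
  shows "1 \<in> W" "n - 1 \<in> W"
  using aut_flips_gap_imp_empty[OF W(1), of 0] aut_flips_gap_imp_empty[OF W(1), of "n - 1"]
    W csucc_0 csucc_last n_pos by auto

lemma aut_flips_eq_if_0_notin:
  assumes "W \<in> aut_flips" "W \<noteq> {}" "0 \<notin> W" "W' \<in> aut_flips" "W' \<noteq> {}" "0 \<notin> W'"
  shows "W = W'"
proof -
  have "0 \<notin> sym_diff W W'" "csucc n 0 \<notin> sym_diff W W'"
    using aut_flips_nonempty_0_notin assms csucc_0 by auto
  then have "sym_diff W W' = {}"
    using aut_flips_gap_imp_empty[OF aut_flips_sym_diff[OF assms(1,4)] n_pos] by blast
  then show ?thesis by blast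
qed

lemma aut_flips_eq:
  assumes A: "A \<in> aut_flips" "0 \<notin> A" "1 \<in> A" "n - 1 \<in> A"
  shows "aut_flips = {{}, A, csucc n ` A, sym_diff A (csucc n ` A)}"
proof -
  define Y where "Y = csucc n ` A"
  have Y: "Y \<in> aut_flips" "0 \<in> Y"
    using aut_flips_csucc_image[OF A(1)] A(4) csucc_last n_pos Y_def by (auto intro: image_eqI)
  have "W \<in> {{}, A, Y, sym_diff A Y}" if W: "W \<in> aut_flips" "W \<noteq> {}" for W
  proof (cases "0 \<in> W")
    case True
    define D where "D = sym_diff W Y"
    have "D \<in> aut_flips" "0 \<notin> D" using aut_flips_sym_diff[OF W(1) Y(1)] True Y(2) D_def by auto
    then have "D = {} \<or> D = A"
      using aut_flips_eq_if_0_notin[of D A] A by blast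
    then have "W = Y \<or> W = sym_diff A Y" using D_def by blast
    then show ?thesis by blast
  qed (use aut_flips_eq_if_0_notin[OF W _ A(1)] A in auto)
  then show ?thesis
    using empty_in_aut_flips A(1) Y(1) aut_flips_sym_diff[OF A(1) Y(1)] Y_def by blast
qed

lemma aut_flips_period_2:
  assumes A: "A \<in> aut_flips" "0 \<notin> A" "1 \<in> A" "n - 1 \<in> A"
    and per: "csucc n ` csucc n ` A = A"
  shows "aut_flips = {{}, {j. j < n \<and> odd j}, {j. j < n \<and> even j}, {..<n}} \<and> 2 dvd n"
proof -
  have "(image (csucc n) ^^ 2) A = A" using per by (simp add: numeral_2_eq_2)
  then have odd: "A = {j. j < n \<and> odd j}" and even: "even n"
    using rotation_invariant_period_2 aut_flips_subset[OF A(1)] A(2-4) by blast+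
  then have "csucc n ` A = {j. j < n \<and> even j}" using csucc_odd_even by simp
  moreover have "sym_diff A (csucc n ` A) = {..<n}" using odd calculation by auto
  ultimately show ?thesis using aut_flips_eq[OF A] odd even by simp
qed

lemma aut_flips_period_3:
  assumes A: "A \<in> aut_flips" "0 \<notin> A" "1 \<in> A" "n - 1 \<in> A"
    and per: "csucc n ` csucc n ` csucc n ` A = A"
  shows "aut_flips = {{}, {j. j < n \<and> j mod 3 \<noteq> 0}, {j. j < n \<and> j mod 3 \<noteq> 1},
      {j. j < n \<and> j mod 3 \<noteq> 2}} \<and> 3 dvd n"
proof -
  have An: "A \<subseteq> {..<n}" using aut_flips_subset[OF A(1)] .
  have per3: "(image (csucc n) ^^ 3) A = A" using per by (simp add: numeral_3_eq_3)
  have "2 \<in> A"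
  proof (cases "n = 3")
    case False
    then have "3 < n" using n_ge_3 by simp
    then have "3 \<notin> A" using rotation_invariant_mem_mod[OF An _ per3, of 3] A(2) by simp
    then show ?thesis
      using aut_flips_gap_imp_empty[OF A(1), of 2] \<open>3 < n\<close> A(3) by (auto simp: csucc_def)
  qed (use A(4) in simp)
  then have mod3: "A = {j. j < n \<and> j mod 3 \<noteq> 0}" and dvd: "3 dvd n"
    using rotation_invariant_period_3[OF An per3] A(2-4) by blast+
  then have Y: "csucc n ` A = {j. j < n \<and> j mod 3 \<noteq> 1}" using csucc_mod_3 by simp
  have "sym_diff A (csucc n ` A) = {j. j < n \<and> (j mod 3 \<noteq> 0) \<noteq> (j mod 3 \<noteq> 1)}"
    unfolding Y by (subst (1 2) mod3) auto
  also have "\<dots> = {j. j < n \<and> j mod 3 \<noteq> 2}" by (rule Collect_cong) presburger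
  finally have "sym_diff A (csucc n ` A) = {j. j < n \<and> j mod 3 \<noteq> 2}" .
  then show ?thesis using aut_flips_eq[OF A] mod3 Y dvd by simp
qed

lemma aut_flips_cases:
  "(aut_flips = {{}, {j. j < n \<and> j mod 3 \<noteq> 0}, {j. j < n \<and> j mod 3 \<noteq> 1},
       {j. j < n \<and> j mod 3 \<noteq> 2}} \<and> 3 dvd n)
   \<or> (aut_flips = {{}, {j. j < n \<and> odd j}, {j. j < n \<and> even j}, {..<n}} \<and> 2 dvd n)"
proof -
  obtain A where A: "A \<in> aut_flips" "0 \<notin> A" "1 \<in> A" "n - 1 \<in> A" using aut_flips_witness by blast
  define Y where "Y = csucc n ` A"
  define Z where "Z = sym_diff A Y"
  have T: "aut_flips = {{}, A, Y, Z}" using aut_flips_eq[OF A] Y_def Z_def by simp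
  have sub: "A \<subseteq> {..<n}" "Y \<subseteq> {..<n}" "Z \<subseteq> {..<n}"
    using aut_flips_subset T by auto
  have "0 \<in> Y" using A(4) csucc_last n_pos Y_def by (auto intro: image_eqI)
  then have ne: "A \<noteq> Y" "Y \<noteq> {}" "Z \<noteq> {}" using A(2) Z_def by auto
  have "csucc n ` Y \<in> aut_flips" "csucc n ` Z \<in> aut_flips"
    using aut_flips_csucc_image T by auto
  moreover have "csucc n ` Y \<noteq> Y" using csucc_image_inj[OF sub(2,1)] ne(1) Y_def by metis
  ultimately have "csucc n ` Y = A \<or> csucc n ` Y = Z" using ne(2) T by auto
  then show ?thesis
  proof
    assume "csucc n ` Y = A"
    then show ?thesis using aut_flips_period_2[OF A] Y_def by simp
  next
    assume YZ: "csucc n ` Y = Z"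
    have "csucc n ` Z \<noteq> Y"
      using csucc_image_inj[OF sub(3,1)] ne(2) Y_def Z_def by auto
    moreover have "csucc n ` Z \<noteq> Z"
      using csucc_image_inj[OF sub(3,2)] YZ A(3) Z_def by auto
    ultimately have "csucc n ` Z = A" using \<open>csucc n ` Z \<in> aut_flips\<close> ne(3) T by auto
    then show ?thesis using aut_flips_period_3[OF A] YZ Y_def by simp
  qed
qed

end

theorem lemma3p1:
  fixes n :: nat and F :: "(nat \<times> bool) set set set"
  assumes "n \<ge> 3" and "n \<noteq> 4"
    and "polytopal_map (RV n) (RE n) F"
    and "class_2_01 (RV n) (RE n) F"
  shows "((groupN n \<inter> map_aut (RV n) (RE n) F =
            flipN n ` {{}, {j. j < n \<and> j mod 3 \<noteq> 0}, {j. j < n \<and> j mod 3 \<noteq> 1},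
                        {j. j < n \<and> j mod 3 \<noteq> 2}} \<and> 3 dvd n)
       \<or> (groupN n \<inter> map_aut (RV n) (RE n) F =
            flipN n ` {{}, {j. j < n \<and> odd j}, {j. j < n \<and> even j}, {..<n}} \<and> 2 dvd n))
       \<and> gcd n 6 \<noteq> 1"
proof -
  interpret rose_window_2_01_map n F
    using assms by unfold_locales
  have T: "groupN n \<inter> map_aut (RV n) (RE n) F = flipN n ` aut_flips"
    by (auto simp: groupN_def aut_flips_def)
  have gcd: "gcd n 6 \<noteq> 1" if "d dvd n" "d dvd 6" "d \<noteq> 1" for d
    using that gcd_greatest[of d n 6] by (metis nat_dvd_1_iff_1)
  from aut_flips_cases show ?thesis
  proof
    assume "aut_flips = {{}, {j. j < n \<and> j mod 3 \<noteq> 0}, {j. j < n \<and> j mod 3 \<noteq> 1},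
       {j. j < n \<and> j mod 3 \<noteq> 2}} \<and> 3 dvd n"
    then show ?thesis using T gcd[of 3] by simp
  next
    assume "aut_flips = {{}, {j. j < n \<and> odd j}, {j. j < n \<and> even j}, {..<n}} \<and> 2 dvd n"
    then show ?thesis using T gcd[of 2] by simp
  qed
qed

end
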